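(* Let $E$ be an infinite-dimensional real Banach space with density character $\kappa$. Then there exist $\delta>0$ and a linearly independent set $S\subseteq S_E$ (the unit sphere of $E$) with $|S|=\kappa$ such that $\|x-\lambda x'\|\ge\delta$ for all distinct $x,x'\in S$ and all $\lambda\in\mathbb R$.
   Context: The density character of a topological space is the least cardinality of a dense subset. *)

theory Defs
  imports "HOL-Analysis.Analysis"
begin

text \<open>A set D realises the density character of a topological space (type 'a):
  D is dense and has least cardinality among all dense subsets.\<close>
definition min_card_dense :: "'a::topological_space set \<Rightarrow> bool" where
  "min_card_dense T \<longleftrightarrow> closure T = UNIV \<and>
     (\<forall>E::'a set. closure E = UNIV \<longrightarrow> (card_of T, card_of E) \<in> ordLeq)"

definition infinite_dimensional :: "'a::real_vector itself \<Rightarrow> bool" where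
  "infinite_dimensional _ \<longleftrightarrow> (\<forall>B::'a set. finite B \<longrightarrow> span B \<noteq> UNIV)"

end

theory Submission
  imports Defs
begin

text \<open>Take a maximal family S of unit vectors that is independent and in which every vector
  has distance at least 1/3 from the line through any other one (Zorn's lemma). By Riesz's
  lemma, a unit vector at distance at least 2/3 from span S could be added to S, so span S
  is dense. As finite-dimensional subspaces are closed, S is infinite, and then the rational
  linear combinations of elements of S form a dense set of cardinality at most |S|. Hence the
  density character is at most |S|, and a subfamily of S of exactly that size does the job.\<close>

lemma min_card_dense_exists: "\<exists>T::'a::topological_space set. min_card_dense T"
proof -
  let ?R = "{card_of E | E::'a set. closure E = UNIV}"
  have "card_of (UNIV::'a set) \<in> ?R" by auto
  then obtain r where r: "r \<in> ?R" "\<forall>r'\<in>?R. (r, r') \<in> ordLeq"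
    using exists_minim_Card_order[of ?R] card_of_Card_order by blast
  then obtain T where "r = card_of T" "closure T = UNIV" by blast
  with r(2) show ?thesis unfolding min_card_dense_def by blast
qed

lemma card_of_countable_ordLeq_infinite:
  assumes "countable A" "infinite S"
  shows "(card_of A, card_of S) \<in> ordLeq"
proof -
  obtain f :: "_ \<Rightarrow> nat" where "inj_on f A" using assms(1) by (auto simp: countable_def)
  then have "(card_of A, card_of (UNIV::nat set)) \<in> ordLeq" using card_of_ordLeq by blast
  with assms(2) show ?thesis using infinite_iff_card_of_nat ordLeq_transitive by blast
qed

lemma infdist_subspace_scaled_le:
  fixes x :: "'a::real_normed_vector"
  assumes "subspace V" "m \<in> V"
  shows "\<bar>c\<bar> * infdist x V \<le> norm (m + c *\<^sub>R x)"
proof (cases "c = 0")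
  case False
  have "- (1/c) *\<^sub>R m \<in> V" using assms by (simp add: subspace_neg subspace_scale)
  then have "infdist x V \<le> norm (x + (1/c) *\<^sub>R m)"
    using infdist_le by (fastforce simp: dist_norm)
  then have "\<bar>c\<bar> * infdist x V \<le> norm (c *\<^sub>R (x + (1/c) *\<^sub>R m))"
    by (simp add: mult_left_mono)
  also have "c *\<^sub>R (x + (1/c) *\<^sub>R m) = m + c *\<^sub>R x" using False by (simp add: algebra_simps)
  finally show ?thesis .
qed simp

lemma closed_span_insert:
  fixes F :: "'a::banach set"
  assumes closed: "closed (span F)"
  shows "closed (span (insert x F))"
proof (cases "x \<in> span F")
  case True
  with closed show ?thesis by (simp add: span_redundant)
next
  case False
  define d where "d = infdist x (span F)"
  have "d > 0"
    using infdist_pos_not_in_closed[OF closed _ False] span_zero unfolding d_def by blast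
  show ?thesis unfolding closed_sequential_limits
  proof (intro allI impI, elim conjE)
    fix y l assume y: "\<forall>n. y n \<in> span (insert x F)" and lim_y: "y \<longlonglongrightarrow> l"
    then have "\<forall>n. \<exists>k. y n - k *\<^sub>R x \<in> span F" unfolding span_insert by blast
    then obtain c where c: "\<And>n. y n - c n *\<^sub>R x \<in> span F" by metis
    have "Cauchy c"
    proof (rule metric_CauchyI)
      fix e :: real assume "e > 0"
      then have "e * d > 0" using \<open>d > 0\<close> by simp
      then obtain M where M: "\<And>m n. m \<ge> M \<Longrightarrow> n \<ge> M \<Longrightarrow> dist (y m) (y n) < e * d"
        using lim_y[THEN LIMSEQ_imp_Cauchy, unfolded Cauchy_def] by blast
      have "dist (c m) (c n) < e" if "m \<ge> M" "n \<ge> M" for m n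
      proof -
        have "(y m - c m *\<^sub>R x) - (y n - c n *\<^sub>R x) \<in> span F" using c by (simp add: span_diff)
        then have "\<bar>c m - c n\<bar> * d \<le> norm ((y m - c m *\<^sub>R x) - (y n - c n *\<^sub>R x) + (c m - c n) *\<^sub>R x)"
          unfolding d_def by (rule infdist_subspace_scaled_le[OF subspace_span])
        also have "\<dots> = dist (y m) (y n)" by (simp add: dist_norm algebra_simps)
        also have "\<dots> < e * d" using M[OF that] .
        finally show ?thesis using \<open>d > 0\<close> by (simp add: dist_real_def)
      qed
      then show "\<exists>M. \<forall>m\<ge>M. \<forall>n\<ge>M. dist (c m) (c n) < e" by blast
    qed
    then obtain a where "c \<longlonglongrightarrow> a" using Cauchy_convergent_iff convergent_def by blast
    with lim_y have "(\<lambda>n. y n - c n *\<^sub>R x) \<longlonglongrightarrow> l - a *\<^sub>R x" by (intro tendsto_intros)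
    with closed c have "l - a *\<^sub>R x \<in> span F" by (rule closed_sequentially)
    then show "l \<in> span (insert x F)" unfolding span_insert by blast
  qed
qed

lemma closed_span_finite:
  fixes F :: "'a::banach set"
  shows "finite F \<Longrightarrow> closed (span F)"
  by (induction F rule: finite_induct) (auto intro: closed_span_insert)

lemma infdist_lessE:
  assumes "A \<noteq> {}" "infdist x A < e"
  obtains a where "a \<in> A" "dist x a < e"
proof -
  have "bdd_below ((\<lambda>a. dist x a) ` A)" by (rule bdd_belowI[of _ 0]) auto
  with assms have "\<exists>a\<in>A. dist x a < e" by (simp add: infdist_notempty cINF_less_iff)
  with that show ?thesis by blast
qed

lemma riesz_lemma:
  fixes V :: "'a::real_normed_vector set"
  assumes V: "subspace V" and "closure V \<noteq> UNIV" and "0 < \<theta>" "\<theta> < 1"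
  obtains y where "norm y = 1" "\<And>w. w \<in> V \<Longrightarrow> \<theta> \<le> norm (y - w)"
proof -
  obtain z where z: "z \<notin> closure V" using assms(2) by blast
  have ne: "V \<noteq> {}" using subspace_0[OF V] by blast
  define d where "d = infdist z V"
  have "d > 0"
    using z in_closure_iff_infdist_zero[OF ne] infdist_nonneg[of z V]
    unfolding d_def by (auto simp: order_le_less)
  with assms have "infdist z V < d / \<theta>" by (simp add: d_def less_divide_eq)
  then obtain m where m: "m \<in> V" "dist z m < d / \<theta>" by (rule infdist_lessE[OF ne])
  define n where "n = norm (z - m)"
  have "d \<le> n" using infdist_le[OF m(1), of z] by (simp add: d_def n_def dist_norm)
  have "\<theta> * n < d" using m(2) \<open>0 < \<theta>\<close> by (simp add: n_def dist_norm less_divide_eq mult.commute)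
  have "n > 0" using \<open>d \<le> n\<close> \<open>d > 0\<close> by simp
  define y where "y = (1/n) *\<^sub>R (z - m)"
  show ?thesis
  proof (rule that)
    show "norm y = 1" using \<open>n > 0\<close> by (simp add: y_def n_def)
    fix w assume "w \<in> V"
    with m(1) V have "m + n *\<^sub>R w \<in> V" by (simp add: subspace_add subspace_scale)
    then have "d \<le> dist z (m + n *\<^sub>R w)" unfolding d_def by (rule infdist_le)
    also have "\<dots> = n * norm (y - w)"
      using \<open>n > 0\<close> norm_scaleR[of n "y - w"] by (simp add: y_def dist_norm algebra_simps)
    finally have "\<theta> * n < norm (y - w) * n" using \<open>\<theta> * n < d\<close> by (simp add: mult.commute)
    then show "\<theta> \<le> norm (y - w)" using \<open>n > 0\<close> by simp
  qed
qed

definition line_separated :: "real \<Rightarrow> 'a::real_normed_vector set \<Rightarrow> bool" where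
  "line_separated \<delta> S \<longleftrightarrow> S \<subseteq> sphere 0 1 \<and> independent S \<and>
     (\<forall>x\<in>S. \<forall>x'\<in>S. x \<noteq> x' \<longrightarrow> (\<forall>c. \<delta> \<le> norm (x - c *\<^sub>R x')))"

lemma line_separated_subset: "line_separated \<delta> S \<Longrightarrow> X \<subseteq> S \<Longrightarrow> line_separated \<delta> X"
  unfolding line_separated_def by (meson dependent_mono order_trans subsetD)

lemma line_separated_Union_chain:
  assumes "subset.chain {S. line_separated \<delta> S} C"
  shows "line_separated \<delta> (\<Union>C)"
proof -
  have sep: "\<And>S. S \<in> C \<Longrightarrow> line_separated \<delta> S"
    and chain: "\<And>S S'. S \<in> C \<Longrightarrow> S' \<in> C \<Longrightarrow> S \<subseteq> S' \<or> S' \<subseteq> S"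
    using assms unfolding subset.chain_def by blast+
  show ?thesis unfolding line_separated_def
  proof (intro conjI ballI impI allI)
    show "\<Union>C \<subseteq> sphere 0 1" using sep unfolding line_separated_def by blast
    show "independent (\<Union>C)"
      using sep chain by (intro independent_Union_directed) (auto simp: line_separated_def)
    fix x x' c assume "x \<in> \<Union>C" "x' \<in> \<Union>C" "x \<noteq> x'"
    then obtain S S' where "S \<in> C" "S' \<in> C" "x \<in> S" "x' \<in> S'" by blast
    with chain obtain S'' where "S'' \<in> C" "x \<in> S''" "x' \<in> S''" by blast
    with sep \<open>x \<noteq> x'\<close> show "\<delta> \<le> norm (x - c *\<^sub>R x')"
      unfolding line_separated_def by blast
  qed
qed

lemma maximal_line_separated_exists:
  obtains S where "line_separated \<delta> S" "\<And>X. line_separated \<delta> X \<Longrightarrow> S \<subseteq> X \<Longrightarrow> X = S"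
  using subset_Zorn'[of "{S. line_separated \<delta> S}"] line_separated_Union_chain by blast

lemma line_distance_swap:
  fixes x y :: "'a::real_normed_vector"
  assumes "norm x = 1" "norm y = 1" "0 \<le> \<delta>" "\<delta> \<le> 1/2" and far: "\<And>t. 2 * \<delta> \<le> norm (y - t *\<^sub>R x)"
  shows "\<delta> \<le> norm (x - c *\<^sub>R y)"
proof (cases "\<bar>c\<bar> \<le> 1 - \<delta>")
  case True
  then show ?thesis using norm_triangle_ineq2[of x "c *\<^sub>R y"] assms(1,2) by simp
next
  case False
  then have "c \<noteq> 0" using assms(4) by auto
  then have "x - c *\<^sub>R y = (- c) *\<^sub>R (y - (1/c) *\<^sub>R x)" by (simp add: algebra_simps)
  then have "norm (x - c *\<^sub>R y) = \<bar>c\<bar> * norm (y - (1/c) *\<^sub>R x)" by simp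
  also have "\<dots> \<ge> (1 - \<delta>) * (2 * \<delta>)"
    using False far[of "1/c"] assms(3,4) by (intro mult_mono) auto
  finally have "(1 - \<delta>) * (2 * \<delta>) \<le> norm (x - c *\<^sub>R y)" .
  moreover have "\<delta> * (2 * \<delta>) \<le> \<delta> * 1" using assms(3,4) by (intro mult_left_mono) auto
  ultimately show ?thesis by (simp add: algebra_simps)
qed

lemma line_separated_insert:
  assumes S: "line_separated \<delta> S" and "0 < \<delta>" "\<delta> \<le> 1/2"
    and y: "norm y = 1" and far: "\<And>w. w \<in> span S \<Longrightarrow> 2 * \<delta> \<le> norm (y - w)"
  shows "line_separated \<delta> (insert y S)"
proof -
  have "y \<notin> span S" using far[of y] \<open>0 < \<delta>\<close> by auto
  moreover have "\<delta> \<le> norm (y - c *\<^sub>R x)" if "x \<in> S" for x c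
    using far[of "c *\<^sub>R x"] that \<open>0 < \<delta>\<close> by (simp add: span_base span_scale)
  moreover have "\<delta> \<le> norm (x - c *\<^sub>R y)" if "x \<in> S" for x c
  proof (rule line_distance_swap)
    show "norm x = 1" using S that by (auto simp: line_separated_def)
    show "2 * \<delta> \<le> norm (y - t *\<^sub>R x)" for t using far that by (simp add: span_base span_scale)
  qed (use assms in auto)
  moreover have "independent (insert y S)"
    using S \<open>y \<notin> span S\<close> independent_insertI unfolding line_separated_def by blast
  ultimately show ?thesis
    using S y unfolding line_separated_def by auto
qed

lemma maximal_line_separated_dense_span:
  assumes S: "line_separated \<delta> S" and "0 < \<delta>" "\<delta> < 1/2"
    and max: "\<And>X. line_separated \<delta> X \<Longrightarrow> S \<subseteq> X \<Longrightarrow> X = S"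
  shows "closure (span S) = UNIV"
proof (rule ccontr)
  assume "closure (span S) \<noteq> UNIV"
  then obtain y where y: "norm y = 1" "\<And>w. w \<in> span S \<Longrightarrow> 2 * \<delta> \<le> norm (y - w)"
    using riesz_lemma[OF subspace_span, of S "2 * \<delta>"] assms(2,3) by auto
  then have "line_separated \<delta> (insert y S)"
    using line_separated_insert[OF S] assms(2,3) by simp
  then have "insert y S = S" using max by blast
  moreover have "y \<notin> span S" using y(2)[of y] \<open>0 < \<delta>\<close> by auto
  ultimately show False using span_base by blast
qed

primrec rat_combs :: "'a::real_vector set \<Rightarrow> nat \<Rightarrow> 'a set" where
  "rat_combs S 0 = {0}"
| "rat_combs S (Suc n) = (\<lambda>(q, x, d). of_rat q *\<^sub>R x + d) ` (UNIV \<times> S \<times> rat_combs S n)"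

lemma card_of_rat_combs:
  assumes "infinite S"
  shows "(card_of (rat_combs S n), card_of S) \<in> ordLeq"
proof (induction n)
  case 0
  then show ?case using assms by (simp add: card_of_singl_ordLeq infinite_imp_nonempty)
next
  case (Suc n)
  have inf: "\<not> finite (Field (card_of S))" using assms by (simp add: Field_card_of)
  have "(card_of (UNIV::rat set), card_of S) \<in> ordLeq"
    using assms by (simp add: card_of_countable_ordLeq_infinite)
  moreover have "(card_of (S \<times> rat_combs S n), card_of S) \<in> ordLeq"
    using inf ordLeq_refl Suc.IH by (rule card_of_Times_ordLeq_infinite_Field) (simp_all add: card_of_Card_order)
  ultimately have "(card_of ((UNIV::rat set) \<times> S \<times> rat_combs S n), card_of S) \<in> ordLeq"
    using card_of_Times_ordLeq_infinite_Field[OF inf] by (simp add: card_of_Card_order)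
  with card_of_image show ?case unfolding rat_combs.simps by (rule ordLeq_transitive)
qed

lemma card_of_Union_rat_combs:
  assumes "infinite S"
  shows "(card_of (\<Union>n. rat_combs S n), card_of S) \<in> ordLeq"
  using card_of_UNION_ordLeq_infinite[OF assms] card_of_rat_combs[OF assms]
    card_of_countable_ordLeq_infinite[OF countableI_type assms] by blast

lemma rat_combs_SucI:
  "d \<in> rat_combs S n \<Longrightarrow> x \<in> S \<Longrightarrow> of_rat q *\<^sub>R x + d \<in> rat_combs S (Suc n)"
  by force

lemma span_subset_closure_rat_combs:
  fixes S :: "'a::real_normed_vector set"
  shows "span S \<subseteq> closure (\<Union>n. rat_combs S n)"
proof
  let ?D = "\<Union>n. rat_combs S n"
  fix v assume "v \<in> span S"
  then show "v \<in> closure ?D"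
  proof (induction rule: span_induct_alt)
    case base
    have "0 \<in> ?D" using rat_combs.simps(1) by blast
    then show ?case using closure_subset by (rule subsetD[rotated])
  next
    case (step c x y)
    define f where "f = (\<lambda>(t, d). t *\<^sub>R x + d)"
    have "f ` (\<rat> \<times> ?D) \<subseteq> ?D"
      using step.hyps(1) rat_combs_SucI unfolding f_def by (fastforce elim!: Rats_cases)
    then have "f ` (\<rat> \<times> ?D) \<subseteq> closure ?D" using closure_subset by (rule order_trans)
    moreover have "continuous_on (closure (\<rat> \<times> ?D)) f"
      unfolding f_def case_prod_unfold by (intro continuous_intros)
    ultimately have "f ` closure (\<rat> \<times> ?D) \<subseteq> closure ?D"
      by (intro image_closure_subset) simp_all
    moreover have "(c, y) \<in> closure (\<rat> \<times> ?D)"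
      using step.IH by (simp add: closure_Times Rats_closure_real)
    ultimately show ?case unfolding f_def by force
  qed
qed

lemma dense_subset_card_le_spanning:
  fixes S :: "'a::real_normed_vector set"
  assumes "infinite S" "closure (span S) = UNIV"
  shows "\<exists>D::'a set. closure D = UNIV \<and> (card_of D, card_of S) \<in> ordLeq"
proof -
  let ?D = "\<Union>n. rat_combs S n"
  have "closure (span S) \<subseteq> closure ?D"
    by (rule closure_minimal[OF span_subset_closure_rat_combs closed_closure])
  with assms(2) have "closure ?D = UNIV" by auto
  moreover have "(card_of ?D, card_of S) \<in> ordLeq" using assms(1) by (rule card_of_Union_rat_combs)
  ultimately show ?thesis by blast
qed

lemma ordLeq_min_card_dense_subset:
  fixes D :: "'a::topological_space set"
  assumes "closure D = UNIV" "(card_of D, card_of S) \<in> ordLeq"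
  obtains T X where "min_card_dense (T::'a set)" "X \<subseteq> S" "(card_of X, card_of T) \<in> ordIso"
proof -
  obtain T :: "'a set" where T: "min_card_dense T" using min_card_dense_exists by blast
  with assms(1) have "(card_of T, card_of D) \<in> ordLeq" unfolding min_card_dense_def by blast
  then have "(card_of T, card_of S) \<in> ordLeq" using assms(2) by (rule ordLeq_transitive)
  then obtain f where f: "inj_on f T" "f ` T \<subseteq> S" using card_of_ordLeq[of T S] by blast
  then have "(card_of T, card_of (f ` T)) \<in> ordIso"
    using card_of_ordIso[of T "f ` T"] inj_on_imp_bij_betw by blast
  then have "(card_of (f ` T), card_of T) \<in> ordIso" by (rule ordIso_symmetric)
  with T f(2) show ?thesis by (rule that)
qed

theorem lemma3p1:
  assumes "infinite_dimensional TYPE('a::banach)"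
  shows "\<exists>\<delta>>0. \<exists>S::'a set. S \<subseteq> sphere 0 1 \<and> independent S \<and>
           (\<exists>T::'a set. min_card_dense T \<and> (card_of S, card_of T) \<in> ordIso) \<and>
           (\<forall>x\<in>S. \<forall>x'\<in>S. x \<noteq> x' \<longrightarrow> (\<forall>c::real. norm (x - c *\<^sub>R x') \<ge> \<delta>))"
proof -
  obtain S :: "'a set" where S: "line_separated (1/3) S"
    and max: "\<And>X. line_separated (1/3) X \<Longrightarrow> S \<subseteq> X \<Longrightarrow> X = S"
    using maximal_line_separated_exists[of "1/3"] by blast
  have dense: "closure (span S) = UNIV"
    using maximal_line_separated_dense_span[OF S _ _ max] by simp
  have "infinite S"
  proof
    assume "finite S"
    then have "span S = UNIV" using dense closure_closed[OF closed_span_finite] by metis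
    with assms \<open>finite S\<close> show False unfolding infinite_dimensional_def by blast
  qed
  then obtain D :: "'a set" where "closure D = UNIV" "(card_of D, card_of S) \<in> ordLeq"
    using dense_subset_card_le_spanning[OF _ dense] by blast
  then obtain T X :: "'a set" where "min_card_dense T" "X \<subseteq> S" "(card_of X, card_of T) \<in> ordIso"
    by (rule ordLeq_min_card_dense_subset)
  moreover from S \<open>X \<subseteq> S\<close> have "line_separated (1/3) X" by (rule line_separated_subset)
  moreover have "(1/3::real) > 0" by simp
  ultimately show ?thesis unfolding line_separated_def by blast
qed

end
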